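(* For each integer $n \geq 1$, let $Z = [Z_{i,j}]_{1 \leq i,j \leq n}$ be a random matrix whose entries are independent and identically distributed random variables that are positive almost surely, with mean $\nu = \nu(n) = \mathbb{E}Z_{1,1}$ and finite second moment $\delta = \delta(n) = \mathbb{E}Z_{1,1}^2$. Let $1 \leq r_1,\ldots,r_n \leq n$ be deterministic integers (possibly depending on $n$), let $\mathcal{M}$ be the set of all $n \times n$ matrices with entries in $\{0,1\}$ having exactly $r_i$ ones in the $i$-th row for each $1 \leq i \leq n$, and let $X = [X_{i,j}]$ be chosen uniformly at random from $\mathcal{M}$, independently of $Z$. Let $Y = [X_{i,j} Z_{i,j}]_{1 \leq i,j \leq n}$ and $T_n = \mathrm{per}(Y) = \sum_{\sigma} \prod_{i=1}^n Y_{i,\sigma(i)}$, the sum being over all permutations $\sigma$ of $\{1,\ldots,n\}$. Setting $\mu_n := \prod_{i=1}^n r_i \cdot \frac{\nu^n n!}{n^n}$, we have $\mathbb{E}T_n = \mu_n$. Moreover, let $r_{low} = \min_{1 \leq i \leq n} r_i$ and $r_{up} = \max_{1 \leq i \leq n} r_i$. If \[ \sqrt{n}\cdot\frac{\delta}{\nu^2 r_{low}} \longrightarrow 0 \quad\text{and}\quad n\left(\frac{\delta}{\nu^2 r_{low}} - \frac{1}{r_{up}}\right) \longrightarrow 0 \quad \text{as } n \to \infty,\] then \[ \mathbb{E}\left(\frac{T_n}{\mu_n} - 1\right)^2 \longrightarrow 0 \quad \text{as } n \to \infty. \]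
   Context: All quantities ($Z$, its distribution, $\nu$, $\delta$, the integers $r_i$) may depend on $n$; the limits are taken along $n \to \infty$. The permanent of an $n\times n$ matrix $A$ is $\mathrm{per}(A)=\sum_\sigma \prod_{i=1}^n A_{i,\sigma(i)}$ over all permutations $\sigma$ of $\{1,\dots,n\}$. *)

theory Defs
  imports "HOL-Probability.Probability"
begin

text \<open>Matrices are indexed by 0-based indices i, j < n, encoded as functions on nat \<times> nat.\<close>

text \<open>The set of n\<times>n 0/1 matrices with exactly r i ones in row i (entries outside the
  index range are fixed to 0 so that the set is finite).\<close>
definition row_sum_mats :: "nat \<Rightarrow> (nat \<Rightarrow> nat) \<Rightarrow> (nat \<times> nat \<Rightarrow> real) set" where
  "row_sum_mats n r = {X. (\<forall>i j. X (i, j) \<in> {0, 1}) \<and>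
      (\<forall>i j. \<not> (i < n \<and> j < n) \<longrightarrow> X (i, j) = 0) \<and>
      (\<forall>i<n. card {j. j < n \<and> X (i, j) = 1} = r i)}"

definition per :: "nat \<Rightarrow> (nat \<times> nat \<Rightarrow> real) \<Rightarrow> real" where
  "per n A = (\<Sum>\<sigma> \<in> {\<sigma>. \<sigma> permutes {..<n}}. \<Prod>i<n. A (i, \<sigma> i))"

definition joint_space :: "nat \<Rightarrow> (nat \<Rightarrow> nat) \<Rightarrow> real measure
     \<Rightarrow> ((nat \<times> nat \<Rightarrow> real) \<times> (nat \<times> nat \<Rightarrow> real)) measure" where
  "joint_space n r D = measure_pmf (pmf_of_set (row_sum_mats n r))
       \<Otimes>\<^sub>M (PiM ({..<n} \<times> {..<n}) (\<lambda>_. D))"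

definition Tn :: "nat \<Rightarrow> (nat \<times> nat \<Rightarrow> real) \<times> (nat \<times> nat \<Rightarrow> real) \<Rightarrow> real" where
  "Tn n XZ = per n (\<lambda>ij. fst XZ ij * snd XZ ij)"

end

(* Expanding per(Y) over permutations, the summand of sigma is a product of entries lying in
   distinct rows, so E T_n = n! * prod_i (r_i / n) * nu^n.  In E T_n^2 the summand of a pair
   (sigma, tau) factorises over the rows as well: a row where sigma and tau agree contributes
   (r_i / n) * delta, any other row r_i (r_i - 1) / (n (n - 1)) * nu^2.  Substituting
   tau = sigma o rho turns E T_n^2 / mu_n^2 into an average over rho of a product that is at most
   A^fix(rho) * B^(n - fix(rho)), with A = n delta / (nu^2 r_low) and
   B = (1 - 1/r_up) n / (n - 1).  Expanding over sets of fixed points bounds this average by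
   B^n exp ((A - B) / B), whose logarithm is at most
   n (y - x) + 1/(n - 1) + n y^2 / (1 - x) for x = 1/r_up, y = delta / (nu^2 r_low);
   the two hypotheses make this bound tend to 0. *)

theory Submission
  imports Defs "HOL-Real_Asymp.Real_Asymp"
begin

section \<open>Permutations and their fixed points\<close>

lemma sum_Pow_card:
  fixes h :: "nat \<Rightarrow> real"
  assumes "finite A"
  shows "(\<Sum>S\<in>Pow A. h (card S)) = (\<Sum>k\<le>card A. real (card A choose k) * h k)"
proof -
  have "(\<Sum>S\<in>Pow A. h (card S)) = (\<Sum>k\<le>card A. \<Sum>S\<in>{S\<in>Pow A. card S = k}. h (card S))"
    using assms by (intro sum.group[symmetric]) (auto intro: card_mono)
  also have "\<dots> = (\<Sum>k\<le>card A. real (card A choose k) * h k)"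
  proof (intro sum.cong refl)
    fix k
    have "(\<Sum>S\<in>{S\<in>Pow A. card S = k}. h (card S)) = real (card {S. S \<subseteq> A \<and> card S = k}) * h k"
      by simp
    then show "(\<Sum>S\<in>{S\<in>Pow A. card S = k}. h (card S)) = real (card A choose k) * h k"
      using n_subsets[OF assms] by simp
  qed
  finally show ?thesis .
qed

lemma sum_power_div_fact_le_exp:
  fixes x :: real
  assumes "0 \<le> x"
  shows "(\<Sum>k\<le>m. x ^ k / fact k) \<le> exp x"
proof -
  have "(\<Sum>k\<le>m. x ^ k / fact k) = (\<Sum>k\<le>m. x ^ k /\<^sub>R fact k)"
    by (simp add: divide_inverse_commute)
  also have "\<dots> \<le> (\<Sum>k. x ^ k /\<^sub>R fact k)"
    using assms by (intro sum_le_suminf summable_exp_generic) auto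
  finally show ?thesis
    by (simp add: exp_def)
qed

lemma permutations_fixing:
  assumes "X \<subseteq> S"
  shows "{\<rho>. \<rho> permutes S \<and> (\<forall>x\<in>X. \<rho> x = x)} = {\<rho>. \<rho> permutes (S - X)}"
proof (intro equalityI subsetI)
  fix \<rho> assume "\<rho> \<in> {\<rho>. \<rho> permutes S \<and> (\<forall>x\<in>X. \<rho> x = x)}"
  then show "\<rho> \<in> {\<rho>. \<rho> permutes (S - X)}"
    unfolding permutes_def by auto
next
  fix \<rho> assume "\<rho> \<in> {\<rho>. \<rho> permutes (S - X)}"
  then show "\<rho> \<in> {\<rho>. \<rho> permutes S \<and> (\<forall>x\<in>X. \<rho> x = x)}"
    by (auto intro: permutes_subset permutes_not_in)
qed

lemma prod_if_fixed_eq_sum_Pow: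
  fixes A B :: real
  assumes "finite S"
  shows "(\<Prod>i\<in>S. if \<rho> i = i then A else B) =
    (\<Sum>X\<in>Pow S. if \<forall>x\<in>X. \<rho> x = x then (A - B) ^ card X * B ^ (card S - card X) else 0)"
proof -
  have "(\<Prod>i\<in>S. if \<rho> i = i then A else B) = (\<Prod>i\<in>S. (if \<rho> i = i then A - B else 0) + B)"
    by (intro prod.cong) auto
  also have "\<dots> = (\<Sum>X\<in>Pow S. (\<Prod>x\<in>X. if \<rho> x = x then A - B else 0) * (\<Prod>x\<in>S - X. B))"
    using assms by (rule prod_add)
  also have "\<dots> = (\<Sum>X\<in>Pow S.
      if \<forall>x\<in>X. \<rho> x = x then (A - B) ^ card X * B ^ (card S - card X) else 0)"
  proof (intro sum.cong refl)
    fix X assume "X \<in> Pow S"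
    then have X: "X \<subseteq> S" "finite X"
      using assms finite_subset by auto
    show "(\<Prod>x\<in>X. if \<rho> x = x then A - B else 0) * (\<Prod>x\<in>S - X. B) =
        (if \<forall>x\<in>X. \<rho> x = x then (A - B) ^ card X * B ^ (card S - card X) else 0)"
    proof (cases "\<forall>x\<in>X. \<rho> x = x")
      case True
      then show ?thesis
        using X assms by (simp add: card_Diff_subset)
    next
      case False
      then show ?thesis
        using X by (auto intro!: prod_zero)
    qed
  qed
  finally show ?thesis .
qed

lemma sum_permutations_fixed_points:
  fixes A B :: real and S :: "'a set"
  assumes S: "finite S"
  shows "(\<Sum>\<rho> | \<rho> permutes S. \<Prod>i\<in>S. if \<rho> i = i then A else B) =
    (\<Sum>k\<le>card S. real (card S choose k) * ((A - B) ^ k * B ^ (card S - k) * fact (card S - k)))"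
proof -
  define w where "w X = (A - B) ^ card X * B ^ (card S - card X)" for X :: "'a set"
  have "(\<Sum>\<rho> | \<rho> permutes S. \<Prod>i\<in>S. if \<rho> i = i then A else B) =
      (\<Sum>\<rho> | \<rho> permutes S. \<Sum>X\<in>Pow S. if \<forall>x\<in>X. \<rho> x = x then w X else 0)"
    unfolding w_def using S by (simp add: prod_if_fixed_eq_sum_Pow)
  also have "\<dots> = (\<Sum>X\<in>Pow S. \<Sum>\<rho> | \<rho> permutes S. if \<forall>x\<in>X. \<rho> x = x then w X else 0)"
    by (rule sum.swap)
  also have "\<dots> = (\<Sum>X\<in>Pow S. w X * fact (card S - card X))"
  proof (intro sum.cong refl)
    fix X assume "X \<in> Pow S"
    then have X: "X \<subseteq> S" "finite X"
      using S finite_subset by auto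
    have "(\<Sum>\<rho> | \<rho> permutes S. if \<forall>x\<in>X. \<rho> x = x then w X else 0) =
        real (card {\<rho>. \<rho> permutes S \<and> (\<forall>x\<in>X. \<rho> x = x)}) * w X"
      using finite_permutations[OF S] by (simp add: sum.If_cases Int_def conj_commute)
    also have "card {\<rho>. \<rho> permutes S \<and> (\<forall>x\<in>X. \<rho> x = x)} = fact (card S - card X)"
      using X S by (simp add: permutations_fixing card_permutations card_Diff_subset)
    finally show "(\<Sum>\<rho> | \<rho> permutes S. if \<forall>x\<in>X. \<rho> x = x then w X else 0) =
        w X * fact (card S - card X)"
      by simp
  qed
  also have "\<dots> = (\<Sum>k\<le>card S. real (card S choose k) * ((A - B) ^ k * B ^ (card S - k) * fact (card S - k)))"
    using sum_Pow_card[OF S, of "\<lambda>k. (A - B) ^ k * B ^ (card S - k) * fact (card S - k)"]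
    by (simp add: w_def)
  finally show ?thesis .
qed

lemma sum_permutations_fixed_points_le:
  fixes A B :: real
  assumes S: "finite S" and B: "0 < B" "B \<le> A"
  shows "(\<Sum>\<rho> | \<rho> permutes S. \<Prod>i\<in>S. if \<rho> i = i then A else B)
    \<le> fact (card S) * B ^ card S * exp ((A - B) / B)"
proof -
  let ?n = "card S"
  have "(\<Sum>k\<le>?n. real (?n choose k) * ((A - B) ^ k * B ^ (?n - k) * fact (?n - k))) =
      fact ?n * B ^ ?n * (\<Sum>k\<le>?n. ((A - B) / B) ^ k / fact k)"
    unfolding sum_distrib_left
  proof (intro sum.cong refl)
    fix k assume "k \<in> {..?n}"
    then have k: "k \<le> ?n" by simp
    then have "B ^ ?n = B ^ k * B ^ (?n - k)"
      by (simp flip: power_add)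
    then show "real (?n choose k) * ((A - B) ^ k * B ^ (?n - k) * fact (?n - k)) =
        fact ?n * B ^ ?n * (((A - B) / B) ^ k / fact k)"
      using B by (simp add: binomial_fact[OF k] field_simps power_divide)
  qed
  also have "\<dots> \<le> fact ?n * B ^ ?n * exp ((A - B) / B)"
    using B by (intro mult_left_mono sum_power_div_fact_le_exp) auto
  finally show ?thesis
    using sum_permutations_fixed_points[OF S] by simp
qed

lemma sum_permutation_pairs_agreeing:
  fixes f :: "'a \<Rightarrow> bool \<Rightarrow> real"
  assumes S: "finite S"
  shows "(\<Sum>\<sigma> | \<sigma> permutes S. \<Sum>\<tau> | \<tau> permutes S. \<Prod>i\<in>S. f i (\<sigma> i = \<tau> i)) =
    fact (card S) * (\<Sum>\<rho> | \<rho> permutes S. \<Prod>i\<in>S. f i (\<rho> i = i))"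
proof -
  have "(\<Sum>\<tau> | \<tau> permutes S. \<Prod>i\<in>S. f i (\<sigma> i = \<tau> i)) =
      (\<Sum>\<rho> | \<rho> permutes S. \<Prod>i\<in>S. f i (\<rho> i = i))" if \<sigma>: "\<sigma> permutes S" for \<sigma>
  proof -
    have "(\<Sum>\<tau> | \<tau> permutes S. \<Prod>i\<in>S. f i (\<sigma> i = \<tau> i)) =
        (\<Sum>\<rho> | \<rho> permutes S. \<Prod>i\<in>S. f i (\<sigma> i = (\<sigma> \<circ> \<rho>) i))"
      by (rule setum_permutations_compose_left[OF \<sigma>])
    also have "\<dots> = (\<Sum>\<rho> | \<rho> permutes S. \<Prod>i\<in>S. f i (\<rho> i = i))"
      using permutes_inj[OF \<sigma>] by (simp add: inj_eq eq_commute)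
    finally show ?thesis .
  qed
  then show ?thesis
    using S by (simp add: card_permutations of_nat_fact)
qed

section \<open>Uniform 0/1 matrices with prescribed row sums\<close>

lemma card_subsets_containing:
  assumes "finite A" "B \<subseteq> A"
  shows "card {S. S \<subseteq> A \<and> card S = k \<and> B \<subseteq> S} =
    (if card B \<le> k then (card A - card B) choose (k - card B) else 0)"
proof (cases "card B \<le> k")
  case True
  have fB: "finite B" using assms finite_subset by blast
  have "bij_betw (\<lambda>T. T \<union> B) {T. T \<subseteq> A - B \<and> card T = k - card B}
      {S. S \<subseteq> A \<and> card S = k \<and> B \<subseteq> S}"
  proof (rule bij_betw_byWitness[where f'="\<lambda>S. S - B"])
    have "card (T \<union> B) = card T + card B" if "T \<subseteq> A - B" for T
      using that assms fB by (subst card_Un_disjoint) (auto intro: finite_subset)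
    then show "(\<lambda>T. T \<union> B) ` {T. T \<subseteq> A - B \<and> card T = k - card B}
        \<subseteq> {S. S \<subseteq> A \<and> card S = k \<and> B \<subseteq> S}"
      using True assms by auto
    show "(\<lambda>S. S - B) ` {S. S \<subseteq> A \<and> card S = k \<and> B \<subseteq> S}
        \<subseteq> {T. T \<subseteq> A - B \<and> card T = k - card B}"
      using fB by (auto simp: card_Diff_subset)
  qed auto
  then have "card {S. S \<subseteq> A \<and> card S = k \<and> B \<subseteq> S} =
      card {T. T \<subseteq> A - B \<and> card T = k - card B}"
    by (simp add: bij_betw_same_card)
  also have "\<dots> = card (A - B) choose (k - card B)"
    using assms by (intro n_subsets) auto
  finally show ?thesis
    using True assms fB by (simp add: card_Diff_subset)
next
  case False
  have "card B \<le> card S" if "S \<subseteq> A" "B \<subseteq> S" for S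
    using that assms by (meson card_mono finite_subset)
  then have "{S. S \<subseteq> A \<and> card S = k \<and> B \<subseteq> S} = {}"
    using False by fastforce
  then show ?thesis
    using False by (metis card.empty)
qed

definition mat_of_row_sets :: "nat \<Rightarrow> (nat \<Rightarrow> nat set) \<Rightarrow> nat \<times> nat \<Rightarrow> real" where
  "mat_of_row_sets n S = (\<lambda>(i, j). if i < n \<and> j < n \<and> j \<in> S i then 1 else 0)"

definition row_set_choices :: "nat \<Rightarrow> (nat \<Rightarrow> nat) \<Rightarrow> (nat \<Rightarrow> nat set) set" where
  "row_set_choices n r = PiE {..<n} (\<lambda>i. {S. S \<subseteq> {..<n} \<and> card S = r i})"

lemma bij_betw_mat_of_row_sets:
  "bij_betw (mat_of_row_sets n) (row_set_choices n r) (row_sum_mats n r)"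
proof (rule bij_betw_byWitness[where f'="\<lambda>X. restrict (\<lambda>i. {j. j < n \<and> X (i, j) = 1}) {..<n}"])
  show "\<forall>S\<in>row_set_choices n r. restrict (\<lambda>i. {j. j < n \<and> mat_of_row_sets n S (i, j) = 1}) {..<n} = S"
  proof
    fix S assume S: "S \<in> row_set_choices n r"
    show "restrict (\<lambda>i. {j. j < n \<and> mat_of_row_sets n S (i, j) = 1}) {..<n} = S"
    proof
      fix i
      show "restrict (\<lambda>i. {j. j < n \<and> mat_of_row_sets n S (i, j) = 1}) {..<n} i = S i"
        using S by (cases "i < n") (auto simp: row_set_choices_def mat_of_row_sets_def PiE_def extensional_def)
    qed
  qed
  show "\<forall>X\<in>row_sum_mats n r. mat_of_row_sets n (restrict (\<lambda>i. {j. j < n \<and> X (i, j) = 1}) {..<n}) = X"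
  proof
    fix X assume X: "X \<in> row_sum_mats n r"
    show "mat_of_row_sets n (restrict (\<lambda>i. {j. j < n \<and> X (i, j) = 1}) {..<n}) = X"
    proof (rule ext, clarify)
      fix i j
      have "X (i, j) = 0 \<or> X (i, j) = 1" and "\<not> (i < n \<and> j < n) \<Longrightarrow> X (i, j) = 0"
        using X unfolding row_sum_mats_def by auto
      then show "mat_of_row_sets n (restrict (\<lambda>i. {j. j < n \<and> X (i, j) = 1}) {..<n}) (i, j) = X (i, j)"
        by (auto simp: mat_of_row_sets_def)
    qed
  qed
  show "mat_of_row_sets n ` row_set_choices n r \<subseteq> row_sum_mats n r"
  proof
    fix X assume "X \<in> mat_of_row_sets n ` row_set_choices n r"
    then obtain S where S: "S \<in> row_set_choices n r" and X: "X = mat_of_row_sets n S" by auto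
    have "{j. j < n \<and> X (i, j) = 1} = S i" if "i < n" for i
      using S that by (auto simp: X mat_of_row_sets_def row_set_choices_def)
    then show "X \<in> row_sum_mats n r"
      using S by (auto simp: row_sum_mats_def X mat_of_row_sets_def row_set_choices_def)
  qed
  show "(\<lambda>X. restrict (\<lambda>i. {j. j < n \<and> X (i, j) = 1}) {..<n}) ` row_sum_mats n r \<subseteq> row_set_choices n r"
    unfolding row_sum_mats_def row_set_choices_def by auto
qed

lemma finite_row_set_choices: "finite (row_set_choices n r)"
  unfolding row_set_choices_def by (intro finite_PiE) auto

lemma finite_row_sum_mats: "finite (row_sum_mats n r)"
  using bij_betw_finite[OF bij_betw_mat_of_row_sets] finite_row_set_choices by blast

lemma card_row_sum_mats: "card (row_sum_mats n r) = (\<Prod>i<n. n choose r i)"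
  using bij_betw_same_card[OF bij_betw_mat_of_row_sets]
  by (simp add: row_set_choices_def card_PiE n_subsets)

lemma row_sum_mats_nonempty:
  assumes "\<And>i. i < n \<Longrightarrow> r i \<le> n"
  shows "row_sum_mats n r \<noteq> {}"
proof -
  have "card (row_sum_mats n r) \<noteq> 0"
    using assms by (auto simp: card_row_sum_mats not_less)
  then show ?thesis by auto
qed

lemma binomial_absorption_twice:
  assumes "2 \<le> k" "k \<le> n"
  shows "real k * (real k - 1) * real (n choose k) = real n * (real n - 1) * real ((n - 2) choose (k - 2))"
proof -
  have "k * (n choose k) = n * ((n - 1) choose (k - 1))"
    using binomial_absorption[of "k - 1" n] assms by simp
  moreover have "(k - 1) * ((n - 1) choose (k - 1)) = (n - 1) * ((n - 2) choose (k - 2))"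
    using binomial_absorption[of "k - 2" "n - 1"] assms by (simp add: numeral_2_eq_2 Suc_diff_Suc)
  ultimately have "(k - 1) * k * (n choose k) = n * (n - 1) * ((n - 2) choose (k - 2))"
    by (metis mult.assoc mult.left_commute)
  then have "real (k - 1) * real k * real (n choose k) = real n * real (n - 1) * real ((n - 2) choose (k - 2))"
    by (metis of_nat_mult)
  then show ?thesis
    using assms by (simp add: of_nat_diff mult_ac)
qed

lemma card_subsets_containing_pair_ratio:
  assumes k: "1 \<le> k" "k \<le> n" and ab: "a < n" "b < n"
  shows "real (card {S. S \<subseteq> {..<n} \<and> card S = k \<and> {a, b} \<subseteq> S}) / real (n choose k) =
    (if a = b then real k / real n else real k * (real k - 1) / (real n * (real n - 1)))"
proof -
  have pos: "0 < n choose k"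
    using k by simp
  have count: "card {S. S \<subseteq> {..<n} \<and> card S = k \<and> {a, b} \<subseteq> S} =
      (if card {a, b} \<le> k then (n - card {a, b}) choose (k - card {a, b}) else 0)"
    using card_subsets_containing[of "{..<n}" "{a, b}" k] ab by simp
  show ?thesis
  proof (cases "a = b")
    case True
    have "real k * real (n choose k) = real n * real ((n - 1) choose (k - 1))"
      using binomial_absorption[of "k - 1" n] k by (simp flip: of_nat_mult)
    then show ?thesis
      using True count pos k by (simp add: field_simps)
  next
    case False
    then have two: "card {a, b} = 2"
      by simp
    show ?thesis
    proof (cases "2 \<le> k")
      case True
      have "real n * (real n - 1) \<noteq> 0"
        using True k by simp
      then show ?thesis
        using binomial_absorption_twice[OF True k(2)] count two False True pos
        by (simp add: field_simps)
    next
      case False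
      then have "card {S. S \<subseteq> {..<n} \<and> card S = k \<and> {a, b} \<subseteq> S} = 0" "k = 1"
        using count two k by (simp_all only: if_False)
      then show ?thesis
        using \<open>a \<noteq> b\<close> by simp
    qed
  qed
qed

lemma integral_row_sum_mats_pair:
  assumes r: "\<And>i. i < n \<Longrightarrow> 1 \<le> r i \<and> r i \<le> n"
    and ab: "\<And>i. i < n \<Longrightarrow> a i < n \<and> b i < n"
  shows "(\<integral>X. (\<Prod>i<n. X (i, a i)) * (\<Prod>i<n. X (i, b i)) \<partial>pmf_of_set (row_sum_mats n r)) =
    (\<Prod>i<n. if a i = b i then real (r i) / real n
      else real (r i) * (real (r i) - 1) / (real n * (real n - 1)))"
proof -
  define C where "C = (\<lambda>i. {S. S \<subseteq> {..<n} \<and> card S = r i})"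
  have "(\<Sum>X\<in>row_sum_mats n r. (\<Prod>i<n. X (i, a i)) * (\<Prod>i<n. X (i, b i))) =
      (\<Sum>S\<in>row_set_choices n r. \<Prod>i<n. mat_of_row_sets n S (i, a i) * mat_of_row_sets n S (i, b i))"
    by (simp add: sum.reindex_bij_betw[OF bij_betw_mat_of_row_sets, symmetric] prod.distrib)
  also have "\<dots> = (\<Sum>S\<in>PiE {..<n} C. \<Prod>i<n. if {a i, b i} \<subseteq> S i then 1 else 0)"
  proof (intro sum.cong prod.cong refl)
    fix S i assume "S \<in> PiE {..<n} C" "i \<in> {..<n}"
    then have "S i \<in> C i" "i < n"
      by auto
    then have "S i \<subseteq> {..<n}" "i < n"
      by (simp_all add: C_def)
    then show "mat_of_row_sets n S (i, a i) * mat_of_row_sets n S (i, b i) =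
        (if {a i, b i} \<subseteq> S i then 1 else 0)"
      using ab by (auto simp: mat_of_row_sets_def)
  qed (simp add: row_set_choices_def C_def)
  also have "\<dots> = (\<Prod>i<n. \<Sum>S\<in>C i. if {a i, b i} \<subseteq> S then 1 else 0)"
    by (rule prod_sum_PiE[symmetric]) (auto simp: C_def)
  also have "\<dots> = (\<Prod>i<n. real (card {S. S \<subseteq> {..<n} \<and> card S = r i \<and> {a i, b i} \<subseteq> S}))"
    by (intro prod.cong refl) (auto simp: C_def sum.If_cases Int_def conj_assoc)
  finally have sum_eq: "(\<Sum>X\<in>row_sum_mats n r. (\<Prod>i<n. X (i, a i)) * (\<Prod>i<n. X (i, b i))) =
      (\<Prod>i<n. real (card {S. S \<subseteq> {..<n} \<and> card S = r i \<and> {a i, b i} \<subseteq> S}))" .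
  have nonempty: "row_sum_mats n r \<noteq> {}"
    using r by (simp add: row_sum_mats_nonempty)
  have "(\<integral>X. (\<Prod>i<n. X (i, a i)) * (\<Prod>i<n. X (i, b i)) \<partial>pmf_of_set (row_sum_mats n r)) =
      (\<Prod>i<n. real (card {S. S \<subseteq> {..<n} \<and> card S = r i \<and> {a i, b i} \<subseteq> S}) / real (n choose r i))"
    unfolding integral_pmf_of_set[OF nonempty finite_row_sum_mats] sum_eq card_row_sum_mats of_nat_prod
    by (simp only: prod_dividef)
  also have "\<dots> = (\<Prod>i<n. if a i = b i then real (r i) / real n
      else real (r i) * (real (r i) - 1) / (real n * (real n - 1)))"
    using r ab by (intro prod.cong refl card_subsets_containing_pair_ratio) auto
  finally show ?thesis .
qed

lemma integral_row_sum_mats: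
  assumes r: "\<And>i. i < n \<Longrightarrow> 1 \<le> r i \<and> r i \<le> n" and a: "\<And>i. i < n \<Longrightarrow> a i < n"
  shows "(\<integral>X. (\<Prod>i<n. X (i, a i)) \<partial>pmf_of_set (row_sum_mats n r)) = (\<Prod>i<n. real (r i) / real n)"
proof -
  have "(\<Prod>i<n. X (i, a i)) * (\<Prod>i<n. X (i, a i)) = (\<Prod>i<n. X (i, a i))"
    if "X \<in> row_sum_mats n r" for X
  proof -
    have "X (i, a i) * X (i, a i) = X (i, a i)" for i
      using that by (auto simp: row_sum_mats_def)
    then show ?thesis
      by (simp only: prod.distrib[symmetric])
  qed
  note idem = this
  have "(\<integral>X. (\<Prod>i<n. X (i, a i)) \<partial>pmf_of_set (row_sum_mats n r)) =
      (\<integral>X. (\<Prod>i<n. X (i, a i)) * (\<Prod>i<n. X (i, a i)) \<partial>pmf_of_set (row_sum_mats n r))"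
    using r by (simp add: integral_pmf_of_set finite_row_sum_mats row_sum_mats_nonempty idem
        cong: sum.cong)
  also have "\<dots> = (\<Prod>i<n. real (r i) / real n)"
    using r a by (simp add: integral_row_sum_mats_pair)
  finally show ?thesis .
qed

section \<open>Moments of products of independent entries\<close>

lemma integral_pair_measure_mult:
  fixes f :: "'a \<Rightarrow> real" and g :: "'b \<Rightarrow> real"
  assumes "pair_sigma_finite M1 M2" and f: "integrable M1 f" and g: "integrable M2 g"
  shows "integrable (M1 \<Otimes>\<^sub>M M2) (\<lambda>\<omega>. f (fst \<omega>) * g (snd \<omega>))"
    and "(\<integral>\<omega>. f (fst \<omega>) * g (snd \<omega>) \<partial>(M1 \<Otimes>\<^sub>M M2)) = (\<integral>x. f x \<partial>M1) * (\<integral>y. g y \<partial>M2)"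
proof -
  interpret pair_sigma_finite M1 M2 by fact
  have [measurable]: "f \<in> borel_measurable M1" "g \<in> borel_measurable M2"
    using f g by auto
  show int: "integrable (M1 \<Otimes>\<^sub>M M2) (\<lambda>\<omega>. f (fst \<omega>) * g (snd \<omega>))"
  proof (rule Fubini_integrable)
    show "integrable M1 (\<lambda>x. \<integral>y. norm (f (fst (x, y)) * g (snd (x, y))) \<partial>M2)"
      using f by (simp add: abs_mult)
    show "AE x in M1. integrable M2 (\<lambda>y. f (fst (x, y)) * g (snd (x, y)))"
      using g by simp
  qed measurable
  show "(\<integral>\<omega>. f (fst \<omega>) * g (snd \<omega>) \<partial>(M1 \<Otimes>\<^sub>M M2)) = (\<integral>x. f x \<partial>M1) * (\<integral>y. g y \<partial>M2)"
    using integral_fst'[OF int] by simp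
qed

lemma integral_joint_space_mult:
  fixes f g :: "(nat \<times> nat \<Rightarrow> real) \<Rightarrow> real"
  assumes D: "prob_space D" and r: "\<And>i. i < n \<Longrightarrow> r i \<le> n"
    and g: "integrable (PiM ({..<n} \<times> {..<n}) (\<lambda>_. D)) g"
  shows "integrable (joint_space n r D) (\<lambda>\<omega>. f (fst \<omega>) * g (snd \<omega>))"
    and "(\<integral>\<omega>. f (fst \<omega>) * g (snd \<omega>) \<partial>joint_space n r D) =
      (\<integral>X. f X \<partial>pmf_of_set (row_sum_mats n r)) * (\<integral>z. g z \<partial>PiM ({..<n} \<times> {..<n}) (\<lambda>_. D))"
proof -
  have set_pmf: "set_pmf (pmf_of_set (row_sum_mats n r)) = row_sum_mats n r"
    using r by (simp add: row_sum_mats_nonempty finite_row_sum_mats)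
  have pair: "pair_sigma_finite (pmf_of_set (row_sum_mats n r)) (PiM ({..<n} \<times> {..<n}) (\<lambda>_. D))"
    using D by (intro pair_sigma_finite.intro measure_pmf.sigma_finite_measure_axioms
        prob_space_imp_sigma_finite prob_space_PiM)
  have f: "integrable (pmf_of_set (row_sum_mats n r)) f"
    using finite_row_sum_mats by (intro integrable_measure_pmf_finite) (simp add: set_pmf)
  note product = integral_pair_measure_mult[OF pair f g]
  show "integrable (joint_space n r D) (\<lambda>\<omega>. f (fst \<omega>) * g (snd \<omega>))"
    unfolding joint_space_def by (rule product(1))
  show "(\<integral>\<omega>. f (fst \<omega>) * g (snd \<omega>) \<partial>joint_space n r D) =
      (\<integral>X. f X \<partial>pmf_of_set (row_sum_mats n r)) * (\<integral>z. g z \<partial>PiM ({..<n} \<times> {..<n}) (\<lambda>_. D))"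
    unfolding joint_space_def by (rule product(2))
qed

lemma integral_PiM_prod_power:
  fixes D :: "real measure" and m :: "'i \<Rightarrow> nat"
  assumes D: "prob_space D" "sets D = sets borel" "integrable D (\<lambda>x. x ^ 2)"
    and I: "finite I" and m: "\<And>p. p \<in> I \<Longrightarrow> m p \<le> 2"
  shows "integrable (PiM I (\<lambda>_. D)) (\<lambda>z. \<Prod>p\<in>I. z p ^ m p)"
    and "(\<integral>z. (\<Prod>p\<in>I. z p ^ m p) \<partial>PiM I (\<lambda>_. D)) = (\<Prod>p\<in>I. \<integral>x. x ^ m p \<partial>D)"
proof -
  interpret prob_space D by fact
  interpret product_sigma_finite "\<lambda>_. D"
    by (simp add: product_sigma_finite_def sigma_finite_measure_axioms)
  have "integrable D (\<lambda>x. x)"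
    by (rule square_integrable_imp_integrable[of "\<lambda>x. x"]) (use D in \<open>simp_all add: measurable_ident_sets\<close>)
  then have power: "integrable D (\<lambda>x. x ^ k)" if "k \<le> 2" for k
    using that D(3) by (cases "k = 2") (auto simp: le_Suc_eq numeral_2_eq_2)
  show "integrable (PiM I (\<lambda>_. D)) (\<lambda>z. \<Prod>p\<in>I. z p ^ m p)"
    by (rule product_integrable_prod[OF I, of "\<lambda>p x. x ^ m p", simplified]) (use power m in auto)
  show "(\<integral>z. (\<Prod>p\<in>I. z p ^ m p) \<partial>PiM I (\<lambda>_. D)) = (\<Prod>p\<in>I. \<integral>x. x ^ m p \<partial>D)"
    by (rule product_integral_prod[OF I, of "\<lambda>p x. x ^ m p", simplified]) (use power m in auto)
qed

text \<open>Writing a diagonal product as a monomial over the whole grid lets the i.i.d. product measure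
  factorise its expectation.\<close>

definition incidence :: "(nat \<Rightarrow> nat) \<Rightarrow> nat \<times> nat \<Rightarrow> nat" where
  "incidence \<sigma> p = (if snd p = \<sigma> (fst p) then 1 else 0)"

lemma prod_grid_incidence:
  fixes g :: "nat \<times> nat \<Rightarrow> nat \<Rightarrow> 'a::comm_monoid_mult"
  assumes \<sigma>: "\<And>i. i < n \<Longrightarrow> \<sigma> i < n" and g: "\<And>p. g p 0 = 1"
  shows "(\<Prod>p\<in>{..<n} \<times> {..<n}. g p (incidence \<sigma> p)) = (\<Prod>i<n. g (i, \<sigma> i) 1)"
proof -
  have "(\<Prod>j<n. g (i, j) (incidence \<sigma> (i, j))) = g (i, \<sigma> i) 1" if "i < n" for i
  proof -
    have "(\<Prod>j<n. g (i, j) (incidence \<sigma> (i, j))) = (\<Prod>j<n. if j = \<sigma> i then g (i, j) 1 else 1)"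
      using g by (intro prod.cong) (auto simp: incidence_def)
    then show ?thesis
      using \<sigma>[OF that] by simp
  qed
  then show ?thesis
    by (simp add: prod.cartesian_product')
qed

lemma prod_grid_incidence_pair:
  fixes g :: "nat \<times> nat \<Rightarrow> nat \<Rightarrow> 'a::comm_monoid_mult"
  assumes \<sigma>: "\<And>i. i < n \<Longrightarrow> \<sigma> i < n" and \<tau>: "\<And>i. i < n \<Longrightarrow> \<tau> i < n"
    and g: "\<And>p. g p 0 = 1"
  shows "(\<Prod>p\<in>{..<n} \<times> {..<n}. g p (incidence \<sigma> p + incidence \<tau> p)) =
    (\<Prod>i<n. if \<sigma> i = \<tau> i then g (i, \<sigma> i) 2 else g (i, \<sigma> i) 1 * g (i, \<tau> i) 1)"
proof -
  have "(\<Prod>j<n. g (i, j) (incidence \<sigma> (i, j) + incidence \<tau> (i, j))) =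
      (if \<sigma> i = \<tau> i then g (i, \<sigma> i) 2 else g (i, \<sigma> i) 1 * g (i, \<tau> i) 1)" if "i < n" for i
  proof (cases "\<sigma> i = \<tau> i")
    case True
    have "(\<Prod>j<n. g (i, j) (incidence \<sigma> (i, j) + incidence \<tau> (i, j))) =
        (\<Prod>j<n. if j = \<sigma> i then g (i, j) 2 else 1)"
      using True g by (intro prod.cong) (auto simp: incidence_def numeral_2_eq_2)
    then show ?thesis
      using True \<sigma>[OF that] by simp
  next
    case False
    have "(\<Prod>j<n. g (i, j) (incidence \<sigma> (i, j) + incidence \<tau> (i, j))) =
        (\<Prod>j<n. (if j = \<sigma> i then g (i, j) 1 else 1) * (if j = \<tau> i then g (i, j) 1 else 1))"
      using False g by (intro prod.cong) (auto simp: incidence_def)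
    then show ?thesis
      using False \<sigma>[OF that] \<tau>[OF that] by (simp add: prod.distrib)
  qed
  then show ?thesis
    by (simp add: prod.cartesian_product')
qed

lemma integral_PiM_prod_graph:
  fixes D :: "real measure" and n :: nat
  assumes D: "prob_space D" "sets D = sets borel" "integrable D (\<lambda>x. x ^ 2)"
    and \<sigma>: "\<And>i. i < n \<Longrightarrow> \<sigma> i < n"
  shows "integrable (PiM ({..<n} \<times> {..<n}) (\<lambda>_. D)) (\<lambda>z. \<Prod>i<n. z (i, \<sigma> i))"
    and "(\<integral>z. (\<Prod>i<n. z (i, \<sigma> i)) \<partial>PiM ({..<n} \<times> {..<n}) (\<lambda>_. D)) = (\<integral>x. x \<partial>D) ^ n"
proof -
  interpret prob_space D by fact
  have graph: "(\<lambda>z :: nat \<times> nat \<Rightarrow> real. \<Prod>i<n. z (i, \<sigma> i)) = (\<lambda>z. \<Prod>p\<in>{..<n} \<times> {..<n}. z p ^ incidence \<sigma> p)"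
  proof (rule ext)
    fix z :: "nat \<times> nat \<Rightarrow> real"
    show "(\<Prod>i<n. z (i, \<sigma> i)) = (\<Prod>p\<in>{..<n} \<times> {..<n}. z p ^ incidence \<sigma> p)"
      using prod_grid_incidence[where \<sigma>=\<sigma> and g="\<lambda>p k. z p ^ k", OF \<sigma>] by simp
  qed
  have "finite ({..<n} \<times> {..<n})" "\<And>p. incidence \<sigma> p \<le> 2"
    by (simp_all add: incidence_def)
  note moment = integral_PiM_prod_power[OF D this]
  show "integrable (PiM ({..<n} \<times> {..<n}) (\<lambda>_. D)) (\<lambda>z. \<Prod>i<n. z (i, \<sigma> i))"
    unfolding graph by (rule moment(1))
  have "(\<integral>z. (\<Prod>i<n. z (i, \<sigma> i)) \<partial>PiM ({..<n} \<times> {..<n}) (\<lambda>_. D)) =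
      (\<Prod>p\<in>{..<n} \<times> {..<n}. \<integral>x. x ^ incidence \<sigma> p \<partial>D)"
    unfolding graph by (rule moment(2))
  also have "\<dots> = (\<Prod>i<n. \<integral>x. x ^ 1 \<partial>D)"
    using \<sigma> by (intro prod_grid_incidence) (simp_all add: prob_space)
  finally show "(\<integral>z. (\<Prod>i<n. z (i, \<sigma> i)) \<partial>PiM ({..<n} \<times> {..<n}) (\<lambda>_. D)) = (\<integral>x. x \<partial>D) ^ n"
    by simp
qed

lemma integral_PiM_prod_graph_pair:
  fixes D :: "real measure" and n :: nat
  assumes D: "prob_space D" "sets D = sets borel" "integrable D (\<lambda>x. x ^ 2)"
    and \<sigma>: "\<And>i. i < n \<Longrightarrow> \<sigma> i < n" and \<tau>: "\<And>i. i < n \<Longrightarrow> \<tau> i < n"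
  shows "integrable (PiM ({..<n} \<times> {..<n}) (\<lambda>_. D))
      (\<lambda>z. (\<Prod>i<n. z (i, \<sigma> i)) * (\<Prod>i<n. z (i, \<tau> i)))"
    and "(\<integral>z. (\<Prod>i<n. z (i, \<sigma> i)) * (\<Prod>i<n. z (i, \<tau> i)) \<partial>PiM ({..<n} \<times> {..<n}) (\<lambda>_. D)) =
      (\<Prod>i<n. if \<sigma> i = \<tau> i then \<integral>x. x ^ 2 \<partial>D else (\<integral>x. x \<partial>D) ^ 2)"
proof -
  interpret prob_space D by fact
  have "(\<Prod>i<n. z (i, \<sigma> i)) * (\<Prod>i<n. z (i, \<tau> i)) =
      (\<Prod>p\<in>{..<n} \<times> {..<n}. z p ^ (incidence \<sigma> p + incidence \<tau> p))" for z :: "nat \<times> nat \<Rightarrow> real"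
  proof -
    have "(\<Prod>i<n. z (i, \<sigma> i)) * (\<Prod>i<n. z (i, \<tau> i)) =
        (\<Prod>i<n. if \<sigma> i = \<tau> i then z (i, \<sigma> i) ^ 2 else z (i, \<sigma> i) ^ 1 * z (i, \<tau> i) ^ 1)"
      by (subst prod.distrib[symmetric]) (auto intro!: prod.cong simp: power2_eq_square)
    also have "\<dots> = (\<Prod>p\<in>{..<n} \<times> {..<n}. z p ^ (incidence \<sigma> p + incidence \<tau> p))"
      by (rule prod_grid_incidence_pair[symmetric]) (use \<sigma> \<tau> in auto)
    finally show ?thesis .
  qed
  then have graph: "(\<lambda>z :: nat \<times> nat \<Rightarrow> real. (\<Prod>i<n. z (i, \<sigma> i)) * (\<Prod>i<n. z (i, \<tau> i))) =
      (\<lambda>z. \<Prod>p\<in>{..<n} \<times> {..<n}. z p ^ (incidence \<sigma> p + incidence \<tau> p))"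
    by (rule ext)
  have "finite ({..<n} \<times> {..<n})" "\<And>p. incidence \<sigma> p + incidence \<tau> p \<le> 2"
    by (simp_all add: incidence_def)
  note moment = integral_PiM_prod_power[OF D this]
  show "integrable (PiM ({..<n} \<times> {..<n}) (\<lambda>_. D))
      (\<lambda>z. (\<Prod>i<n. z (i, \<sigma> i)) * (\<Prod>i<n. z (i, \<tau> i)))"
    unfolding graph by (rule moment(1))
  have "(\<integral>z. (\<Prod>i<n. z (i, \<sigma> i)) * (\<Prod>i<n. z (i, \<tau> i)) \<partial>PiM ({..<n} \<times> {..<n}) (\<lambda>_. D)) =
      (\<Prod>p\<in>{..<n} \<times> {..<n}. \<integral>x. x ^ (incidence \<sigma> p + incidence \<tau> p) \<partial>D)"
    unfolding graph by (rule moment(2))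
  also have "\<dots> = (\<Prod>i<n. if \<sigma> i = \<tau> i then \<integral>x. x ^ 2 \<partial>D
      else (\<integral>x. x ^ 1 \<partial>D) * (\<integral>x. x ^ 1 \<partial>D))"
    using \<sigma> \<tau> by (intro prod_grid_incidence_pair) (simp_all add: prob_space)
  finally show "(\<integral>z. (\<Prod>i<n. z (i, \<sigma> i)) * (\<Prod>i<n. z (i, \<tau> i)) \<partial>PiM ({..<n} \<times> {..<n}) (\<lambda>_. D)) =
      (\<Prod>i<n. if \<sigma> i = \<tau> i then \<integral>x. x ^ 2 \<partial>D else (\<integral>x. x \<partial>D) ^ 2)"
    by (simp only: power_one_right power2_eq_square[of "\<integral>x. x \<partial>D"])
qed

section \<open>Moments of the permanent\<close>

definition mean_per :: "nat \<Rightarrow> (nat \<Rightarrow> nat) \<Rightarrow> real \<Rightarrow> real" where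
  "mean_per n r \<nu> = (\<Prod>i<n. real (r i)) * (\<nu> ^ n * fact n / real n ^ n)"

lemma mean_per_eq:
  "mean_per n r \<nu> = fact n * (\<Prod>i<n. real (r i) / real n) * \<nu> ^ n"
  by (simp add: mean_per_def prod_dividef)

lemma prob_space_joint_space:
  assumes "prob_space D" "\<And>i. i < n \<Longrightarrow> r i \<le> n"
  shows "prob_space (joint_space n r D)"
  unfolding joint_space_def using assms
  by (intro prob_space_pair prob_space_PiM prob_space_measure_pmf) (auto simp: row_sum_mats_nonempty)

lemma Tn_eq_sum_permutations:
  "Tn n = (\<lambda>\<omega>. \<Sum>\<sigma> | \<sigma> permutes {..<n}. (\<Prod>i<n. fst \<omega> (i, \<sigma> i)) * (\<Prod>i<n. snd \<omega> (i, \<sigma> i)))"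
  by (simp add: fun_eq_iff Tn_def per_def prod.distrib)

lemma Tn_sq_eq_sum_permutations:
  "(\<lambda>\<omega>. Tn n \<omega> ^ 2) = (\<lambda>\<omega>. \<Sum>\<sigma> | \<sigma> permutes {..<n}. \<Sum>\<tau> | \<tau> permutes {..<n}.
     ((\<Prod>i<n. fst \<omega> (i, \<sigma> i)) * (\<Prod>i<n. fst \<omega> (i, \<tau> i))) *
     ((\<Prod>i<n. snd \<omega> (i, \<sigma> i)) * (\<Prod>i<n. snd \<omega> (i, \<tau> i))))"
  by (simp add: fun_eq_iff Tn_eq_sum_permutations power2_eq_square sum_product ac_simps)

lemma permutes_lessThan_less: "\<sigma> permutes {..<n} \<Longrightarrow> i < n \<Longrightarrow> \<sigma> i < n"
  using permutes_in_image by fastforce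

lemma integral_joint_space_graph:
  fixes D :: "real measure"
  assumes D: "prob_space D" "sets D = sets borel" "integrable D (\<lambda>x. x ^ 2)"
    and r: "\<And>i. i < n \<Longrightarrow> 1 \<le> r i \<and> r i \<le> n" and \<sigma>: "\<And>i. i < n \<Longrightarrow> \<sigma> i < n"
  shows "integrable (joint_space n r D) (\<lambda>\<omega>. (\<Prod>i<n. fst \<omega> (i, \<sigma> i)) * (\<Prod>i<n. snd \<omega> (i, \<sigma> i)))"
    and "(\<integral>\<omega>. (\<Prod>i<n. fst \<omega> (i, \<sigma> i)) * (\<Prod>i<n. snd \<omega> (i, \<sigma> i)) \<partial>joint_space n r D) =
      (\<Prod>i<n. real (r i) / real n) * (\<integral>x. x \<partial>D) ^ n"
proof -
  have r': "\<And>i. i < n \<Longrightarrow> r i \<le> n"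
    using r by simp
  note Z = integral_PiM_prod_graph[OF D \<sigma>]
  note product = integral_joint_space_mult[OF D(1) r' Z(1), where f="\<lambda>X. \<Prod>i<n. X (i, \<sigma> i)"]
  show "integrable (joint_space n r D) (\<lambda>\<omega>. (\<Prod>i<n. fst \<omega> (i, \<sigma> i)) * (\<Prod>i<n. snd \<omega> (i, \<sigma> i)))"
    by (rule product(1))
  show "(\<integral>\<omega>. (\<Prod>i<n. fst \<omega> (i, \<sigma> i)) * (\<Prod>i<n. snd \<omega> (i, \<sigma> i)) \<partial>joint_space n r D) =
      (\<Prod>i<n. real (r i) / real n) * (\<integral>x. x \<partial>D) ^ n"
    using r \<sigma> by (simp add: product(2) Z(2) integral_row_sum_mats)
qed

lemma integral_joint_space_graph_pair:
  fixes D :: "real measure"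
  assumes D: "prob_space D" "sets D = sets borel" "integrable D (\<lambda>x. x ^ 2)"
    and r: "\<And>i. i < n \<Longrightarrow> 1 \<le> r i \<and> r i \<le> n"
    and \<sigma>: "\<And>i. i < n \<Longrightarrow> \<sigma> i < n" and \<tau>: "\<And>i. i < n \<Longrightarrow> \<tau> i < n"
  shows "integrable (joint_space n r D) (\<lambda>\<omega>.
      ((\<Prod>i<n. fst \<omega> (i, \<sigma> i)) * (\<Prod>i<n. fst \<omega> (i, \<tau> i))) *
      ((\<Prod>i<n. snd \<omega> (i, \<sigma> i)) * (\<Prod>i<n. snd \<omega> (i, \<tau> i))))"
    and "(\<integral>\<omega>. ((\<Prod>i<n. fst \<omega> (i, \<sigma> i)) * (\<Prod>i<n. fst \<omega> (i, \<tau> i))) *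
      ((\<Prod>i<n. snd \<omega> (i, \<sigma> i)) * (\<Prod>i<n. snd \<omega> (i, \<tau> i))) \<partial>joint_space n r D) = (\<Prod>i<n.
      if \<sigma> i = \<tau> i then real (r i) / real n * (\<integral>x. x ^ 2 \<partial>D)
      else real (r i) * (real (r i) - 1) / (real n * (real n - 1)) * (\<integral>x. x \<partial>D) ^ 2)"
proof -
  have r': "\<And>i. i < n \<Longrightarrow> r i \<le> n"
    using r by simp
  note Z = integral_PiM_prod_graph_pair[OF D \<sigma> \<tau>]
  note product = integral_joint_space_mult[OF D(1) r' Z(1),
      where f="\<lambda>X. (\<Prod>i<n. X (i, \<sigma> i)) * (\<Prod>i<n. X (i, \<tau> i))"]
  show "integrable (joint_space n r D) (\<lambda>\<omega>.
      ((\<Prod>i<n. fst \<omega> (i, \<sigma> i)) * (\<Prod>i<n. fst \<omega> (i, \<tau> i))) *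
      ((\<Prod>i<n. snd \<omega> (i, \<sigma> i)) * (\<Prod>i<n. snd \<omega> (i, \<tau> i))))"
    by (rule product(1))
  have "(\<integral>X. (\<Prod>i<n. X (i, \<sigma> i)) * (\<Prod>i<n. X (i, \<tau> i)) \<partial>pmf_of_set (row_sum_mats n r)) =
      (\<Prod>i<n. if \<sigma> i = \<tau> i then real (r i) / real n
        else real (r i) * (real (r i) - 1) / (real n * (real n - 1)))"
    using r \<sigma> \<tau> by (intro integral_row_sum_mats_pair) auto
  moreover have "(\<integral>\<omega>. ((\<Prod>i<n. fst \<omega> (i, \<sigma> i)) * (\<Prod>i<n. fst \<omega> (i, \<tau> i))) *
      ((\<Prod>i<n. snd \<omega> (i, \<sigma> i)) * (\<Prod>i<n. snd \<omega> (i, \<tau> i))) \<partial>joint_space n r D) =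
      (\<integral>X. (\<Prod>i<n. X (i, \<sigma> i)) * (\<Prod>i<n. X (i, \<tau> i)) \<partial>pmf_of_set (row_sum_mats n r)) *
      (\<integral>z. (\<Prod>i<n. z (i, \<sigma> i)) * (\<Prod>i<n. z (i, \<tau> i)) \<partial>PiM ({..<n} \<times> {..<n}) (\<lambda>_. D))"
    by (rule product(2))
  ultimately show "(\<integral>\<omega>. ((\<Prod>i<n. fst \<omega> (i, \<sigma> i)) * (\<Prod>i<n. fst \<omega> (i, \<tau> i))) *
      ((\<Prod>i<n. snd \<omega> (i, \<sigma> i)) * (\<Prod>i<n. snd \<omega> (i, \<tau> i))) \<partial>joint_space n r D) = (\<Prod>i<n.
      if \<sigma> i = \<tau> i then real (r i) / real n * (\<integral>x. x ^ 2 \<partial>D)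
      else real (r i) * (real (r i) - 1) / (real n * (real n - 1)) * (\<integral>x. x \<partial>D) ^ 2)"
    using Z(2) by (simp add: prod.distrib[symmetric] if_distrib cong: prod.cong if_cong)
qed

lemma integral_Tn:
  fixes D :: "real measure"
  assumes D: "prob_space D" "sets D = sets borel" "integrable D (\<lambda>x. x ^ 2)"
    and r: "\<And>i. i < n \<Longrightarrow> 1 \<le> r i \<and> r i \<le> n"
  shows "integrable (joint_space n r D) (Tn n)"
    and "(\<integral>\<omega>. Tn n \<omega> \<partial>joint_space n r D) = mean_per n r (\<integral>x. x \<partial>D)"
proof -
  have summand:
    "integrable (joint_space n r D) (\<lambda>\<omega>. (\<Prod>i<n. fst \<omega> (i, \<sigma> i)) * (\<Prod>i<n. snd \<omega> (i, \<sigma> i)))"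
    "(\<integral>\<omega>. (\<Prod>i<n. fst \<omega> (i, \<sigma> i)) * (\<Prod>i<n. snd \<omega> (i, \<sigma> i)) \<partial>joint_space n r D) =
      (\<Prod>i<n. real (r i) / real n) * (\<integral>x. x \<partial>D) ^ n"
    if "\<sigma> permutes {..<n}" for \<sigma>
    using integral_joint_space_graph[OF D r permutes_lessThan_less[OF that]] by simp_all
  show "integrable (joint_space n r D) (Tn n)"
    unfolding Tn_eq_sum_permutations using summand(1) by (intro Bochner_Integration.integrable_sum) auto
  have "(\<integral>\<omega>. Tn n \<omega> \<partial>joint_space n r D) =
      (\<Sum>\<sigma> | \<sigma> permutes {..<n}. (\<Prod>i<n. real (r i) / real n) * (\<integral>x. x \<partial>D) ^ n)"
    unfolding Tn_eq_sum_permutations using summand by (simp add: Bochner_Integration.integral_sum)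
  also have "\<dots> = mean_per n r (\<integral>x. x \<partial>D)"
    by (simp add: mean_per_eq card_permutations)
  finally show "(\<integral>\<omega>. Tn n \<omega> \<partial>joint_space n r D) = mean_per n r (\<integral>x. x \<partial>D)" .
qed

lemma integral_Tn_sq:
  fixes D :: "real measure"
  assumes D: "prob_space D" "sets D = sets borel" "integrable D (\<lambda>x. x ^ 2)"
    and r: "\<And>i. i < n \<Longrightarrow> 1 \<le> r i \<and> r i \<le> n"
  shows "integrable (joint_space n r D) (\<lambda>\<omega>. Tn n \<omega> ^ 2)"
    and "(\<integral>\<omega>. Tn n \<omega> ^ 2 \<partial>joint_space n r D) =
      (\<Sum>\<sigma> | \<sigma> permutes {..<n}. \<Sum>\<tau> | \<tau> permutes {..<n}. \<Prod>i<n.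
        if \<sigma> i = \<tau> i then real (r i) / real n * (\<integral>x. x ^ 2 \<partial>D)
        else real (r i) * (real (r i) - 1) / (real n * (real n - 1)) * (\<integral>x. x \<partial>D) ^ 2)"
proof -
  have summand: "integrable (joint_space n r D) (\<lambda>\<omega>.
      ((\<Prod>i<n. fst \<omega> (i, \<sigma> i)) * (\<Prod>i<n. fst \<omega> (i, \<tau> i))) *
      ((\<Prod>i<n. snd \<omega> (i, \<sigma> i)) * (\<Prod>i<n. snd \<omega> (i, \<tau> i))))"
    "(\<integral>\<omega>. ((\<Prod>i<n. fst \<omega> (i, \<sigma> i)) * (\<Prod>i<n. fst \<omega> (i, \<tau> i))) *
      ((\<Prod>i<n. snd \<omega> (i, \<sigma> i)) * (\<Prod>i<n. snd \<omega> (i, \<tau> i))) \<partial>joint_space n r D) = (\<Prod>i<n.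
      if \<sigma> i = \<tau> i then real (r i) / real n * (\<integral>x. x ^ 2 \<partial>D)
      else real (r i) * (real (r i) - 1) / (real n * (real n - 1)) * (\<integral>x. x \<partial>D) ^ 2)"
    if "\<sigma> permutes {..<n}" "\<tau> permutes {..<n}" for \<sigma> \<tau>
    using integral_joint_space_graph_pair[OF D r permutes_lessThan_less[OF that(1)]
        permutes_lessThan_less[OF that(2)]] by simp_all
  have inner: "integrable (joint_space n r D) (\<lambda>\<omega>. \<Sum>\<tau> | \<tau> permutes {..<n}.
      ((\<Prod>i<n. fst \<omega> (i, \<sigma> i)) * (\<Prod>i<n. fst \<omega> (i, \<tau> i))) *
      ((\<Prod>i<n. snd \<omega> (i, \<sigma> i)) * (\<Prod>i<n. snd \<omega> (i, \<tau> i))))"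
    if "\<sigma> permutes {..<n}" for \<sigma>
    using summand(1)[OF that] by (intro Bochner_Integration.integrable_sum) auto
  show "integrable (joint_space n r D) (\<lambda>\<omega>. Tn n \<omega> ^ 2)"
    unfolding Tn_sq_eq_sum_permutations by (rule Bochner_Integration.integrable_sum) (simp add: inner)
  have "(\<integral>\<omega>. Tn n \<omega> ^ 2 \<partial>joint_space n r D) = (\<Sum>\<sigma> | \<sigma> permutes {..<n}. \<integral>\<omega>.
      (\<Sum>\<tau> | \<tau> permutes {..<n}. ((\<Prod>i<n. fst \<omega> (i, \<sigma> i)) * (\<Prod>i<n. fst \<omega> (i, \<tau> i))) *
        ((\<Prod>i<n. snd \<omega> (i, \<sigma> i)) * (\<Prod>i<n. snd \<omega> (i, \<tau> i)))) \<partial>joint_space n r D)"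
    unfolding Tn_sq_eq_sum_permutations by (rule Bochner_Integration.integral_sum) (simp add: inner)
  also have "\<dots> = (\<Sum>\<sigma> | \<sigma> permutes {..<n}. \<Sum>\<tau> | \<tau> permutes {..<n}. \<integral>\<omega>.
      ((\<Prod>i<n. fst \<omega> (i, \<sigma> i)) * (\<Prod>i<n. fst \<omega> (i, \<tau> i))) *
      ((\<Prod>i<n. snd \<omega> (i, \<sigma> i)) * (\<Prod>i<n. snd \<omega> (i, \<tau> i))) \<partial>joint_space n r D)"
    by (intro sum.cong refl Bochner_Integration.integral_sum summand(1)) auto
  finally show "(\<integral>\<omega>. Tn n \<omega> ^ 2 \<partial>joint_space n r D) =
      (\<Sum>\<sigma> | \<sigma> permutes {..<n}. \<Sum>\<tau> | \<tau> permutes {..<n}. \<Prod>i<n.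
        if \<sigma> i = \<tau> i then real (r i) / real n * (\<integral>x. x ^ 2 \<partial>D)
        else real (r i) * (real (r i) - 1) / (real n * (real n - 1)) * (\<integral>x. x \<partial>D) ^ 2)"
    using summand(2) by simp
qed

lemma (in prob_space) integral_relative_deviation_sq:
  fixes T :: "'a \<Rightarrow> real"
  assumes T: "integrable M T" "integrable M (\<lambda>\<omega>. T \<omega> ^ 2)"
    and mean: "expectation T = \<mu>" and "\<mu> \<noteq> 0"
  shows "expectation (\<lambda>\<omega>. (T \<omega> / \<mu> - 1) ^ 2) = expectation (\<lambda>\<omega>. T \<omega> ^ 2) / \<mu>\<^sup>2 - 1"
proof -
  have "(T \<omega> / \<mu> - 1) ^ 2 = T \<omega> ^ 2 * (1 / \<mu>\<^sup>2) + (T \<omega> * (- 2 / \<mu>) + 1)" for \<omega>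
    using \<open>\<mu> \<noteq> 0\<close> by (simp add: power2_eq_square field_simps)
  then have "expectation (\<lambda>\<omega>. (T \<omega> / \<mu> - 1) ^ 2) =
      expectation (\<lambda>\<omega>. T \<omega> ^ 2) / \<mu>\<^sup>2 + (expectation T * (- 2 / \<mu>) + 1)"
    using T by (simp add: prob_space)
  then show ?thesis
    using mean \<open>\<mu> \<noteq> 0\<close> by (simp add: power2_eq_square field_simps)
qed

lemma positive_variable_moments:
  fixes D :: "real measure"
  assumes "prob_space D" "sets D = sets borel" "AE x in D. 0 < x" "integrable D (\<lambda>x. x ^ 2)"
  shows "0 < (\<integral>x. x \<partial>D)" and "(\<integral>x. x \<partial>D) ^ 2 \<le> (\<integral>x. x ^ 2 \<partial>D)"
proof -
  interpret prob_space D by fact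
  have int: "integrable D (\<lambda>x. x)"
    by (rule square_integrable_imp_integrable[of "\<lambda>x. x"]) (use assms in \<open>simp_all add: measurable_ident_sets\<close>)
  show "0 < (\<integral>x. x \<partial>D)"
    using integral_less_AE_space[of "\<lambda>_. 0" "\<lambda>x. x"] int assms(3) by (simp add: emeasure_space_1)
  have "0 \<le> variance (\<lambda>x. x)"
    by (intro integral_nonneg_AE) auto
  then show "(\<integral>x. x \<partial>D) ^ 2 \<le> (\<integral>x. x ^ 2 \<partial>D)"
    using variance_eq[OF int] assms(4) by simp
qed

section \<open>The normalised second moment\<close>

lemma second_moment_ratio_eq:
  fixes \<nu> \<delta> :: real
  assumes n: "2 \<le> n" and \<nu>: "0 < \<nu>" and r: "\<And>i. i < n \<Longrightarrow> 1 \<le> r i"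
  shows "(\<Sum>\<sigma> | \<sigma> permutes {..<n}. \<Sum>\<tau> | \<tau> permutes {..<n}. \<Prod>i<n.
        if \<sigma> i = \<tau> i then real (r i) / real n * \<delta>
        else real (r i) * (real (r i) - 1) / (real n * (real n - 1)) * \<nu> ^ 2) / mean_per n r \<nu> ^ 2 =
    (\<Sum>\<rho> | \<rho> permutes {..<n}. \<Prod>i<n. if \<rho> i = i then real n * \<delta> / (real (r i) * \<nu> ^ 2)
        else (real (r i) - 1) * real n / (real (r i) * (real n - 1))) / fact n"
proof -
  define q where "q i = real (r i) / real n * \<nu>" for i
  define c where "c i t = (if t then real n * \<delta> / (real (r i) * \<nu> ^ 2)
      else (real (r i) - 1) * real n / (real (r i) * (real n - 1)))" for i t
  have n_gt_1: "1 < real n"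
    using n by simp
  have "(\<Prod>i<n. if \<sigma> i = \<tau> i then real (r i) / real n * \<delta>
        else real (r i) * (real (r i) - 1) / (real n * (real n - 1)) * \<nu> ^ 2) =
      (\<Prod>i<n. q i) ^ 2 * (\<Prod>i<n. c i (\<sigma> i = \<tau> i))" for \<sigma> \<tau> :: "nat \<Rightarrow> nat"
  proof -
    have "(\<Prod>i<n. if \<sigma> i = \<tau> i then real (r i) / real n * \<delta>
        else real (r i) * (real (r i) - 1) / (real n * (real n - 1)) * \<nu> ^ 2) =
      (\<Prod>i<n. q i ^ 2 * c i (\<sigma> i = \<tau> i))"
      using r \<nu> n_gt_1 by (intro prod.cong) (auto simp: q_def c_def power2_eq_square field_simps)
    then show ?thesis
      by (simp add: prod.distrib prod_power_distrib)
  qed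
  then have "(\<Sum>\<sigma> | \<sigma> permutes {..<n}. \<Sum>\<tau> | \<tau> permutes {..<n}. \<Prod>i<n.
        if \<sigma> i = \<tau> i then real (r i) / real n * \<delta>
        else real (r i) * (real (r i) - 1) / (real n * (real n - 1)) * \<nu> ^ 2) =
      (\<Prod>i<n. q i) ^ 2 * (\<Sum>\<sigma> | \<sigma> permutes {..<n}. \<Sum>\<tau> | \<tau> permutes {..<n}. \<Prod>i<n. c i (\<sigma> i = \<tau> i))"
    by (simp add: sum_distrib_left)
  also have "\<dots> = (\<Prod>i<n. q i) ^ 2 * (fact n * (\<Sum>\<rho> | \<rho> permutes {..<n}. \<Prod>i<n. c i (\<rho> i = i)))"
    using sum_permutation_pairs_agreeing[of "{..<n}" c] by simp
  finally have sum_eq: "(\<Sum>\<sigma> | \<sigma> permutes {..<n}. \<Sum>\<tau> | \<tau> permutes {..<n}. \<Prod>i<n.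
        if \<sigma> i = \<tau> i then real (r i) / real n * \<delta>
        else real (r i) * (real (r i) - 1) / (real n * (real n - 1)) * \<nu> ^ 2) =
      (\<Prod>i<n. q i) ^ 2 * (fact n * (\<Sum>\<rho> | \<rho> permutes {..<n}. \<Prod>i<n. c i (\<rho> i = i)))" .
  have "0 < q i" if "i < n" for i
    using r[OF that] \<nu> n_gt_1 by (simp add: q_def)
  then have q_pos: "0 < (\<Prod>i<n. q i)"
    by (intro prod_pos) simp
  have mean: "mean_per n r \<nu> = fact n * (\<Prod>i<n. q i)"
    unfolding mean_per_eq q_def prod.distrib by simp
  have cancel: "P ^ 2 * (F * S) / (F * P) ^ 2 = S / F" if "P \<noteq> 0" "F \<noteq> 0" for P F S :: real
    using that by (simp add: power2_eq_square field_simps)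
  show ?thesis
    unfolding sum_eq mean c_def using q_pos by (intro cancel) (linarith, simp)
qed

lemma second_moment_ratio_le:
  fixes \<nu> \<delta> :: real and rl ru :: nat
  assumes n: "2 \<le> n" and \<nu>: "0 < \<nu>" "\<nu> ^ 2 \<le> \<delta>"
    and r: "\<And>i. i < n \<Longrightarrow> rl \<le> r i \<and> r i \<le> ru" and rl: "1 \<le> rl" and ru: "2 \<le> ru" "ru \<le> n"
  defines "B \<equiv> (1 - 1 / real ru) * real n / (real n - 1)"
  shows "(\<Sum>\<sigma> | \<sigma> permutes {..<n}. \<Sum>\<tau> | \<tau> permutes {..<n}. \<Prod>i<n.
        if \<sigma> i = \<tau> i then real (r i) / real n * \<delta>
        else real (r i) * (real (r i) - 1) / (real n * (real n - 1)) * \<nu> ^ 2) / mean_per n r \<nu> ^ 2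
    \<le> B ^ n * exp ((real n * (\<delta> / (\<nu> ^ 2 * real rl)) - B) / B)"
proof -
  define A where "A = real n * (\<delta> / (\<nu> ^ 2 * real rl))"
  have r_ge_1: "1 \<le> real (r i)" if "i < n" for i
    using r[OF that] rl by simp
  have n_gt_1: "1 < real n"
    using n by simp
  have \<delta>: "0 \<le> \<delta>"
    using \<nu>(2) zero_le_power2[of \<nu>] by linarith
  have "1 \<le> \<delta> / \<nu> ^ 2" "1 \<le> real n / real rl"
    using \<nu> rl r[of 0] ru n by simp_all
  then have "1 \<le> A"
    unfolding A_def using mult_mono[of 1 "\<delta> / \<nu> ^ 2" 1 "real n / real rl"] by (simp add: field_simps)
  moreover have "0 < B" "B \<le> 1"
    using ru n_gt_1 by (simp_all add: B_def field_simps)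
  ultimately have B: "0 < B" "B \<le> A"
    by simp_all
  have "real n * \<delta> / (real (r i) * \<nu> ^ 2) \<le> A"
    and "(real (r i) - 1) * real n / (real (r i) * (real n - 1)) \<le> B"
    and "0 \<le> (real (r i) - 1) * real n / (real (r i) * (real n - 1))"
    if "i < n" for i
  proof -
    show "real n * \<delta> / (real (r i) * \<nu> ^ 2) \<le> A"
      using r[OF that] rl \<nu> \<delta> n_gt_1 unfolding A_def times_divide_eq_right mult.commute[of _ "\<nu> ^ 2"]
      by (intro divide_left_mono mult_left_mono mult_pos_pos) auto
    have "(real (r i) - 1) / real (r i) \<le> 1 - 1 / real ru"
      using r[OF that] r_ge_1[OF that] by (simp add: field_simps)
    then have "(real (r i) - 1) / real (r i) * (real n / (real n - 1)) \<le>
        (1 - 1 / real ru) * (real n / (real n - 1))"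
      using n_gt_1 by (intro mult_right_mono) simp_all
    then show "(real (r i) - 1) * real n / (real (r i) * (real n - 1)) \<le> B"
      unfolding B_def by simp
    show "0 \<le> (real (r i) - 1) * real n / (real (r i) * (real n - 1))"
      using r_ge_1[OF that] n_gt_1 by simp
  qed
  moreover have "0 \<le> real n * \<delta> / (real (r i) * \<nu> ^ 2)" for i
    using \<delta> by simp
  ultimately have "(\<Sum>\<rho> | \<rho> permutes {..<n}. \<Prod>i<n. if \<rho> i = i then real n * \<delta> / (real (r i) * \<nu> ^ 2)
        else (real (r i) - 1) * real n / (real (r i) * (real n - 1))) / fact n
      \<le> (\<Sum>\<rho> | \<rho> permutes {..<n}. \<Prod>i<n. if \<rho> i = i then A else B) / fact n"
    by (intro divide_right_mono sum_mono prod_mono) auto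
  also have "\<dots> \<le> B ^ n * exp ((A - B) / B)"
    using sum_permutations_fixed_points_le[of "{..<n}" B A] B by (simp add: divide_le_eq ac_simps)
  finally show ?thesis
    using second_moment_ratio_eq[OF n \<nu>(1), of r \<delta>] r rl unfolding A_def by force
qed

definition deviation_exponent :: "nat \<Rightarrow> real \<Rightarrow> real \<Rightarrow> real" where
  "deviation_exponent n x y = real n * (y - x) + 1 / (real n - 1) + real n * y ^ 2 / (1 - x)"

lemma power_exp_le_exp_deviation_exponent:
  fixes x y :: real
  assumes n: "2 \<le> n" and x: "0 < x" "x < 1" "x \<le> y"
  defines "B \<equiv> (1 - x) * real n / (real n - 1)"
  shows "B ^ n * exp ((real n * y - B) / B) \<le> exp (deviation_exponent n x y)"
proof -
  have n_gt_1: "1 < real n"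
    using n by simp
  have "real n / (real n - 1) = 1 + 1 / (real n - 1)"
    using n_gt_1 by (simp add: field_simps)
  then have "B \<le> exp (- x) * exp (1 / (real n - 1))"
    unfolding B_def times_divide_eq_right[symmetric]
    using x n_gt_1 exp_ge_add_one_self[of "- x"] exp_ge_add_one_self[of "1 / (real n - 1)"]
    by (intro mult_mono) auto
  then have "B ^ n \<le> exp (real n * (1 / (real n - 1) - x))"
    using x n_gt_1 by (simp add: B_def power_mono exp_of_nat_mult flip: exp_add)
  moreover have "(real n * y - B) / B = y * (real n - 1) / (1 - x) - 1"
  proof -
    have "0 < B"
      using x n_gt_1 by (simp add: B_def)
    then have "(real n * y - B) / B = real n * y / B - 1"
      by (simp add: diff_divide_distrib)
    also have "real n * y / B = y * (real n - 1) / (1 - x)"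
      using x n_gt_1 by (simp add: B_def field_simps)
    finally show ?thesis .
  qed
  moreover have "y * (real n - 1) / (1 - x) \<le> real n * y + real n * y ^ 2 / (1 - x)"
  proof -
    have "0 \<le> y + real n * y * (y - x)"
      using x by (intro add_nonneg_nonneg mult_nonneg_nonneg) auto
    then have "y * (real n - 1) \<le> real n * y * (1 - x) + real n * y ^ 2"
      by (simp add: algebra_simps power2_eq_square)
    then have "y * (real n - 1) / (1 - x) \<le> (real n * y * (1 - x) + real n * y ^ 2) / (1 - x)"
      using x by (intro divide_right_mono) auto
    also have "\<dots> = real n * y + real n * y ^ 2 / (1 - x)"
      using x by (simp add: field_simps)
    finally show ?thesis .
  qed
  moreover have "real n * (1 / (real n - 1)) - 1 = 1 / (real n - 1)"
    using n_gt_1 by (simp add: field_simps)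
  ultimately have "B ^ n * exp ((real n * y - B) / B) \<le>
      exp (real n * (1 / (real n - 1) - x)) * exp (real n * y + real n * y ^ 2 / (1 - x) - 1)"
    by (intro mult_mono) auto
  also have "\<dots> = exp (deviation_exponent n x y)"
    using \<open>real n * (1 / (real n - 1)) - 1 = 1 / (real n - 1)\<close>
    by (simp add: deviation_exponent_def algebra_simps flip: exp_add)
  finally show ?thesis .
qed

lemma deviation_exponent_tendsto_0:
  fixes x y :: "nat \<Rightarrow> real"
  assumes xy: "\<forall>\<^sub>F n in sequentially. 0 < x n \<and> x n \<le> y n"
    and y: "(\<lambda>n. sqrt (real n) * y n) \<longlonglongrightarrow> 0" and yx: "(\<lambda>n. real n * (y n - x n)) \<longlonglongrightarrow> 0"
  shows "x \<longlonglongrightarrow> 0" and "(\<lambda>n. deviation_exponent n (x n) (y n)) \<longlonglongrightarrow> 0"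
proof -
  show x: "x \<longlonglongrightarrow> 0"
  proof (rule tendsto_sandwich[OF _ _ tendsto_const y])
    show "\<forall>\<^sub>F n in sequentially. 0 \<le> x n"
      using xy by eventually_elim simp
    show "\<forall>\<^sub>F n in sequentially. x n \<le> sqrt (real n) * y n"
      using xy eventually_ge_at_top[of 1]
    proof eventually_elim
      case (elim n)
      then have "1 * y n \<le> sqrt (real n) * y n"
        by (intro mult_right_mono) simp_all
      then show ?case
        using elim by linarith
    qed
  qed
  have "(\<lambda>n. (sqrt (real n) * y n) ^ 2 / (1 - x n)) \<longlonglongrightarrow> 0 ^ 2 / (1 - 0)"
    by (intro tendsto_intros y x) simp
  then have "(\<lambda>n. real n * y n ^ 2 / (1 - x n)) \<longlonglongrightarrow> 0"
    by (simp add: power_mult_distrib)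
  moreover have "(\<lambda>n. 1 / (real n - 1)) \<longlonglongrightarrow> 0"
    by real_asymp
  ultimately show "(\<lambda>n. deviation_exponent n (x n) (y n)) \<longlonglongrightarrow> 0"
    unfolding deviation_exponent_def using yx by (intro tendsto_add_zero)
qed

lemma moment_ratio_bounds:
  fixes D :: "real measure" and rl ru :: nat
  assumes D: "prob_space D" "sets D = sets borel" "AE x in D. 0 < x" "integrable D (\<lambda>x. x ^ 2)"
    and rl: "1 \<le> rl" "rl \<le> ru"
  shows "0 < 1 / real ru" and "1 / real ru \<le> (\<integral>x. x ^ 2 \<partial>D) / ((\<integral>x. x \<partial>D) ^ 2 * real rl)"
proof -
  show "0 < 1 / real ru"
    using rl by simp
  have "1 / real ru \<le> 1 / real rl"
    using rl by (simp add: frac_le)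
  also have "\<dots> \<le> (\<integral>x. x ^ 2 \<partial>D) / ((\<integral>x. x \<partial>D) ^ 2 * real rl)"
    using positive_variable_moments[OF D] rl by (simp add: field_simps)
  finally show "1 / real ru \<le> (\<integral>x. x ^ 2 \<partial>D) / ((\<integral>x. x \<partial>D) ^ 2 * real rl)" .
qed

lemma relative_variance_le:
  fixes D :: "real measure" and rl ru :: nat
  assumes n: "2 \<le> n"
    and D: "prob_space D" "sets D = sets borel" "AE x in D. 0 < x" "integrable D (\<lambda>x. x ^ 2)"
    and r: "\<And>i. i < n \<Longrightarrow> rl \<le> r i \<and> r i \<le> ru" and rl: "1 \<le> rl" and ru: "2 \<le> ru" "ru \<le> n"
  defines "\<nu> \<equiv> \<integral>x. x \<partial>D" and "\<delta> \<equiv> \<integral>x. x ^ 2 \<partial>D"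
  shows "(\<integral>\<omega>. (Tn n \<omega> / mean_per n r \<nu> - 1) ^ 2 \<partial>joint_space n r D)
    \<le> exp (deviation_exponent n (1 / real ru) (\<delta> / (\<nu> ^ 2 * real rl))) - 1"
proof -
  have \<nu>: "0 < \<nu>" "\<nu> ^ 2 \<le> \<delta>"
    using positive_variable_moments[OF D] by (simp_all add: \<nu>_def \<delta>_def)
  have r': "\<And>i. i < n \<Longrightarrow> 1 \<le> r i \<and> r i \<le> n"
    using r rl ru by force
  have "mean_per n r \<nu> \<noteq> 0"
    using r' \<nu> n by (fastforce simp: mean_per_def prod_zero_iff Suc_le_eq)
  moreover interpret joint: prob_space "joint_space n r D"
    using D(1) r' by (intro prob_space_joint_space) auto
  note moments = integral_Tn[OF D(1,2,4) r'] integral_Tn_sq[OF D(1,2,4) r']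
  ultimately have "(\<integral>\<omega>. (Tn n \<omega> / mean_per n r \<nu> - 1) ^ 2 \<partial>joint_space n r D) =
      (\<integral>\<omega>. Tn n \<omega> ^ 2 \<partial>joint_space n r D) / mean_per n r \<nu> ^ 2 - 1"
    by (intro joint.integral_relative_deviation_sq) (simp_all add: \<nu>_def)
  also have "\<dots> \<le> ((1 - 1 / real ru) * real n / (real n - 1)) ^ n *
      exp ((real n * (\<delta> / (\<nu> ^ 2 * real rl)) - (1 - 1 / real ru) * real n / (real n - 1))
        / ((1 - 1 / real ru) * real n / (real n - 1))) - 1"
    using second_moment_ratio_le[where r=r, OF n \<nu> r rl ru] moments(4)
    by (simp only: \<nu>_def \<delta>_def diff_right_mono)
  also have "\<dots> \<le> exp (deviation_exponent n (1 / real ru) (\<delta> / (\<nu> ^ 2 * real rl))) - 1"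
  proof -
    have "rl \<le> ru"
      using r[of 0] n by auto
    then have "0 < 1 / real ru" "1 / real ru \<le> \<delta> / (\<nu> ^ 2 * real rl)"
      using moment_ratio_bounds[OF D rl] by (simp_all add: \<nu>_def \<delta>_def)
    moreover have "1 / real ru < 1"
      using ru by simp
    ultimately show ?thesis
      using power_exp_le_exp_deviation_exponent[OF n, of "1 / real ru" "\<delta> / (\<nu> ^ 2 * real rl)"] by simp
  qed
  finally show ?thesis .
qed

lemma Min_Max_image_lessThan:
  fixes f :: "nat \<Rightarrow> 'a::linorder"
  assumes "0 < n" and f: "\<And>i. i < n \<Longrightarrow> a \<le> f i \<and> f i \<le> b"
  shows "a \<le> Min (f ` {..<n})" and "Max (f ` {..<n}) \<le> b"
    and "\<And>i. i < n \<Longrightarrow> Min (f ` {..<n}) \<le> f i \<and> f i \<le> Max (f ` {..<n})"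
proof -
  have "f ` {..<n} \<noteq> {}"
    using \<open>0 < n\<close> by (auto simp: lessThan_empty_iff)
  then show "a \<le> Min (f ` {..<n})" "Max (f ` {..<n}) \<le> b"
    "\<And>i. i < n \<Longrightarrow> Min (f ` {..<n}) \<le> f i \<and> f i \<le> Max (f ` {..<n})"
    using f by (auto simp: Min_ge_iff Max_le_iff)
qed

theorem theorem1:
  fixes D :: "nat \<Rightarrow> real measure" and r :: "nat \<Rightarrow> nat \<Rightarrow> nat"
    and \<nu> \<delta> \<mu> :: "nat \<Rightarrow> real" and rlow rup :: "nat \<Rightarrow> nat"
  assumes prob: "\<And>n. n \<ge> 1 \<Longrightarrow> prob_space (D n)"
    and sets_D: "\<And>n. n \<ge> 1 \<Longrightarrow> sets (D n) = sets borel"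
    and pos: "\<And>n. n \<ge> 1 \<Longrightarrow> (AE x in D n. x > 0)"
    and second: "\<And>n. n \<ge> 1 \<Longrightarrow> integrable (D n) (\<lambda>x. x ^ 2)"
    and \<nu>_def: "\<And>n. \<nu> n = (\<integral>x. x \<partial>D n)"
    and \<delta>_def: "\<And>n. \<delta> n = (\<integral>x. x ^ 2 \<partial>D n)"
    and r_bounds: "\<And>n i. n \<ge> 1 \<Longrightarrow> i < n \<Longrightarrow> 1 \<le> r n i \<and> r n i \<le> n"
    and \<mu>_def: "\<And>n. \<mu> n = (\<Prod>i<n. real (r n i)) * (\<nu> n ^ n * fact n / real n ^ n)"
    and rlow_def: "\<And>n. rlow n = Min (r n ` {..<n})"
    and rup_def: "\<And>n. rup n = Max (r n ` {..<n})"
  shows "(\<forall>n\<ge>1. (\<integral>\<omega>. Tn n \<omega> \<partial>joint_space n (r n) (D n)) = \<mu> n)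
    \<and> ((((\<lambda>n. sqrt (real n) * (\<delta> n / (\<nu> n ^ 2 * real (rlow n)))) \<longlonglongrightarrow> 0)
        \<and> ((\<lambda>n. real n * (\<delta> n / (\<nu> n ^ 2 * real (rlow n)) - 1 / real (rup n))) \<longlonglongrightarrow> 0))
       \<longrightarrow> ((\<lambda>n. \<integral>\<omega>. (Tn n \<omega> / \<mu> n - 1) ^ 2 \<partial>joint_space n (r n) (D n)) \<longlonglongrightarrow> 0))"
proof -
  have D: "prob_space (D n)" "sets (D n) = sets borel" "AE x in D n. 0 < x" "integrable (D n) (\<lambda>x. x ^ 2)"
    if "1 \<le> n" for n
    using prob sets_D pos second that by auto
  have r_range: "1 \<le> rlow n" "rup n \<le> n" "\<And>i. i < n \<Longrightarrow> rlow n \<le> r n i \<and> r n i \<le> rup n"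
    if "1 \<le> n" for n
    unfolding rlow_def rup_def
    using Min_Max_image_lessThan[where f="r n" and a=1 and b=n] that r_bounds[OF that] by simp_all
  have \<mu>_eq: "\<mu> n = mean_per n (r n) (\<nu> n)" for n
    by (simp add: \<mu>_def mean_per_def)
  show ?thesis
  proof (intro conjI allI impI)
    fix n :: nat
    assume "1 \<le> n"
    then show "(\<integral>\<omega>. Tn n \<omega> \<partial>joint_space n (r n) (D n)) = \<mu> n"
      using integral_Tn(2)[OF D(1,2,4) r_bounds] by (simp add: \<mu>_eq \<nu>_def)
  next
    define x where "x n = 1 / real (rup n)" for n
    define y where "y n = \<delta> n / (\<nu> n ^ 2 * real (rlow n))" for n
    assume "((\<lambda>n. sqrt (real n) * (\<delta> n / (\<nu> n ^ 2 * real (rlow n)))) \<longlonglongrightarrow> 0)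
        \<and> ((\<lambda>n. real n * (\<delta> n / (\<nu> n ^ 2 * real (rlow n)) - 1 / real (rup n))) \<longlonglongrightarrow> 0)"
    then have y: "(\<lambda>n. sqrt (real n) * y n) \<longlonglongrightarrow> 0" and yx: "(\<lambda>n. real n * (y n - x n)) \<longlonglongrightarrow> 0"
      by (simp_all add: x_def y_def)
    have xy: "\<forall>\<^sub>F n in sequentially. 0 < x n \<and> x n \<le> y n"
      using eventually_ge_at_top[of 1]
    proof eventually_elim
      case (elim n)
      then have "rlow n \<le> rup n"
        using r_range(3)[OF elim, of 0] by simp
      then show ?case
        using moment_ratio_bounds[OF D[OF elim] r_range(1)[OF elim]] by (simp add: x_def y_def \<nu>_def \<delta>_def)
    qed
    note limits = deviation_exponent_tendsto_0[OF xy y yx]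
    have "\<forall>\<^sub>F n in sequentially. x n < 1 / 2"
      using limits(1) by (rule order_tendstoD) simp
    then have upper: "\<forall>\<^sub>F n in sequentially.
        (\<integral>\<omega>. (Tn n \<omega> / \<mu> n - 1) ^ 2 \<partial>joint_space n (r n) (D n)) \<le> exp (deviation_exponent n (x n) (y n)) - 1"
      using eventually_ge_at_top[of 2] xy
    proof eventually_elim
      case (elim n)
      then have "1 \<le> n" "2 \<le> rup n"
        by (simp_all add: x_def field_simps)
      then show ?case
        using relative_variance_le[OF elim(2) D r_range(3) r_range(1) \<open>2 \<le> rup n\<close> r_range(2)]
        by (simp only: \<mu>_eq \<nu>_def \<delta>_def x_def y_def)
    qed
    have lower: "\<forall>\<^sub>F n in sequentially. 0 \<le> (\<integral>\<omega>. (Tn n \<omega> / \<mu> n - 1) ^ 2 \<partial>joint_space n (r n) (D n))"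
      by (intro always_eventually allI integral_nonneg_AE AE_I2) simp
    have "(\<lambda>n. exp (deviation_exponent n (x n) (y n)) - 1) \<longlonglongrightarrow> exp 0 - 1"
      by (intro tendsto_intros limits(2))
    then show "(\<lambda>n. \<integral>\<omega>. (Tn n \<omega> / \<mu> n - 1) ^ 2 \<partial>joint_space n (r n) (D n)) \<longlonglongrightarrow> 0"
      using tendsto_sandwich[OF lower upper tendsto_const] by simp
  qed
qed

end
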